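(* Let the premiums $\{X_n, n\geq 1\}$, the claims $\{Y_n, n\geq 1\}$ and the rates of interest $\{I_n, n\geq 1\}$ be mutually independent sequences of nonnegative i.i.d. random variables with finite expectations. For $u\geq 0$ define $U_0=u$, $U_n=(U_{n-1}+X_n)(1+I_n)-Y_n$ for $n\geq 1$, and $\Psi(u)=\mathbb{P}\big(\bigcup_{n=1}^\infty\{U_n<0\}\big)$. Let $$S_n=\sum_{i=1}^n\Big(\big(Y_i(1+I_i)^{-1}-X_i\big)\prod_{j=1}^{i-1}(1+I_j)^{-1}\Big),\quad n\geq 1,$$ with the empty product equal to $1$. If there exists a positive real number $R$ satisfying $$\mathbb{E}\Big(e^{R\left(Y_1(1+I_1)^{-1}-X_1\right)}\Big)\leq 1,$$ then $\{Z_n=e^{RS_n}, n\geq 1\}$ is a supermartingale (i.e. $\mathbb{E}(Z_{n+1}\mid Z_1,\dots,Z_n)\leq Z_n$ a.s. for all $n$), and $\Psi(u)\leq e^{-Ru}$ for all $u>0$. *)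

theory Defs
  imports "HOL-Probability.Probability"
begin

fun surplus :: "real \<Rightarrow> (nat \<Rightarrow> 'a \<Rightarrow> real) \<Rightarrow> (nat \<Rightarrow> 'a \<Rightarrow> real) \<Rightarrow> (nat \<Rightarrow> 'a \<Rightarrow> real)
    \<Rightarrow> nat \<Rightarrow> 'a \<Rightarrow> real" where
  "surplus u X Y I 0 \<omega> = u"
| "surplus u X Y I (Suc n) \<omega> =
     (surplus u X Y I n \<omega> + X (Suc n) \<omega>) * (1 + I (Suc n) \<omega>) - Y (Suc n) \<omega>"

definition ruin_prob :: "'a measure \<Rightarrow> (nat \<Rightarrow> 'a \<Rightarrow> real) \<Rightarrow> (nat \<Rightarrow> 'a \<Rightarrow> real)
    \<Rightarrow> (nat \<Rightarrow> 'a \<Rightarrow> real) \<Rightarrow> real \<Rightarrow> real" where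
  "ruin_prob M X Y I u = measure M (\<Union>n\<in>{1..}. {\<omega> \<in> space M. surplus u X Y I n \<omega> < 0})"

definition disc_loss :: "(nat \<Rightarrow> 'a \<Rightarrow> real) \<Rightarrow> (nat \<Rightarrow> 'a \<Rightarrow> real) \<Rightarrow> (nat \<Rightarrow> 'a \<Rightarrow> real)
    \<Rightarrow> nat \<Rightarrow> 'a \<Rightarrow> real" where
  "disc_loss X Y I n \<omega> =
     (\<Sum>i=1..n. (Y i \<omega> * inverse (1 + I i \<omega>) - X i \<omega>) * (\<Prod>j\<in>{1..<i}. inverse (1 + I j \<omega>)))"

text \<open>The joint family of all premiums, claims and interest rates, indexed by
  (0,n) for X_n, (1,n) for Y_n, (2,n) for I_n.\<close>
definition risk_family :: "(nat \<Rightarrow> 'a \<Rightarrow> real) \<Rightarrow> (nat \<Rightarrow> 'a \<Rightarrow> real) \<Rightarrow> (nat \<Rightarrow> 'a \<Rightarrow> real)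
    \<Rightarrow> nat \<times> nat \<Rightarrow> 'a \<Rightarrow> real" where
  "risk_family X Y I k = (if fst k = 0 then X (snd k) else if fst k = 1 then Y (snd k) else I (snd k))"

definition gen_sigma :: "'a measure \<Rightarrow> (nat \<Rightarrow> 'a \<Rightarrow> real) \<Rightarrow> nat \<Rightarrow> 'a measure" where
  "gen_sigma M Z n = sigma (space M) {Z i -` A \<inter> space M | i A. i \<in> {1..n} \<and> A \<in> sets borel}"

end

theory Submission
  imports Defs
begin

(* Discounting by the accumulated interest turns ruin into a level crossing: with
   d_n = prod_{j=1..n} (1 + I_j)^(-1), which lies in (0,1], one has U_n = (u - S_n) / d_n, so U_n < 0
   iff S_n > u.  Moreover S_(n+1) = S_n + d_n W_(n+1) with W_(n+1) = Y_(n+1) / (1 + I_(n+1)) - X_(n+1);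
   here d_n is determined by the first n periods, while W_(n+1) is independent of them and distributed
   like W_1.  Convexity of exp gives E exp(p R W_1) <= 1 for all p in [0,1], hence
   E[Z_(n+1); A] <= E[Z_n; A] for every event A of the first n periods.  This is the supermartingale
   property; applied to the events "S_k <= u for all k <= N" it yields
   e^(Ru) P(ruin by time N) + E[Z_N; no ruin by time N] <= 1, and N -> infinity bounds Psi(u). *)

lemma (in prob_space) nn_integral_exp_scaled_le_one:
  assumes f[measurable]: "f \<in> borel_measurable M"
    and exp_f: "(\<integral>\<^sup>+x. exp (f x) \<partial>M) \<le> 1" and p: "0 \<le> p" "p \<le> 1"
  shows "(\<integral>\<^sup>+x. exp (p * f x) \<partial>M) \<le> 1"
proof -
  have convex: "exp (p * f x) \<le> (1 - p) + p * exp (f x)" for x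
    using convex_onD[OF exp_convex, of p 0 "f x"] p by simp
  have "(\<integral>\<^sup>+x. exp (p * f x) \<partial>M) \<le> (\<integral>\<^sup>+x. ennreal (1 - p) + ennreal p * exp (f x) \<partial>M)"
    using p convex by (intro nn_integral_mono) (simp flip: ennreal_plus ennreal_mult)
  also have "\<dots> = ennreal (1 - p) + ennreal p * (\<integral>\<^sup>+x. exp (f x) \<partial>M)"
    by (simp add: nn_integral_add nn_integral_cmult emeasure_space_1)
  also have "\<dots> \<le> ennreal (1 - p) + ennreal p * 1"
    using exp_f by (intro add_left_mono mult_left_mono) auto
  also have "\<dots> = 1"
    using p by (simp flip: ennreal_plus)
  finally show ?thesis .
qed

lemma (in prob_space) distr_restrict_eq_if_indep_vars:
  assumes "indep_vars N X K" "indep_vars N X' K" "K \<noteq> {}"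
    and "\<And>i. i \<in> K \<Longrightarrow> distr M (N i) (X i) = distr M (N i) (X' i)"
  shows "distr M (PiM K N) (\<lambda>\<omega>. \<lambda>i\<in>K. X i \<omega>) = distr M (PiM K N) (\<lambda>\<omega>. \<lambda>i\<in>K. X' i \<omega>)"
proof -
  have product: "distr M (PiM K N) (\<lambda>\<omega>. \<lambda>i\<in>K. V i \<omega>) = PiM K (\<lambda>i. distr M (N i) (V i))"
    if "indep_vars N V K" for V
    using that \<open>K \<noteq> {}\<close> by (subst indep_vars_iff_distr_eq_PiM'[symmetric]) (auto simp: indep_vars_def)
  show ?thesis
    using assms(4) by (simp add: product[OF assms(1)] product[OF assms(2)] cong: PiM_cong)
qed

lemma (in prob_space) indep_var_vimage_algebra:
  assumes "indep_var S \<xi> T \<eta>"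
  shows "indep_var (vimage_algebra (space M) \<xi> S) (\<lambda>\<omega>. \<omega>) (vimage_algebra (space M) \<eta> T) (\<lambda>\<omega>. \<omega>)"
proof -
  have "random_variable S \<xi>" "random_variable T \<eta>"
    using assms by (auto dest: indep_var_rv1 indep_var_rv2)
  moreover have "random_variable (vimage_algebra (space M) f N) (\<lambda>\<omega>. \<omega>)"
    "{(\<lambda>\<omega>. \<omega>) -` A \<inter> space M |A. A \<in> sets (vimage_algebra (space M) f N)}
      = {f -` B \<inter> space M |B. B \<in> sets N}"
    if "random_variable N f" for N and f :: "'a \<Rightarrow> 'b"
    using that by (auto intro: measurable_vimage_algebra2 simp: sets_vimage_algebra2 measurable_def)
  ultimately show ?thesis
    using assms by (simp add: indep_var_eq)
qed

lemma (in prob_space) nn_integral_indep_var_le: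
  assumes indep: "indep_var S \<xi> T \<eta>"
    and G[measurable]: "G \<in> borel_measurable S"
    and H[measurable]: "(\<lambda>(a, b). H a b) \<in> borel_measurable (S \<Otimes>\<^sub>M T)"
    and bound: "\<And>\<omega>. \<omega> \<in> space M \<Longrightarrow> (\<integral>\<^sup>+\<omega>'. H (\<xi> \<omega>) (\<eta> \<omega>') \<partial>M) \<le> 1"
  shows "(\<integral>\<^sup>+\<omega>. G (\<xi> \<omega>) * H (\<xi> \<omega>) (\<eta> \<omega>) \<partial>M) \<le> (\<integral>\<^sup>+\<omega>. G (\<xi> \<omega>) \<partial>M)"
proof -
  have [measurable]: "\<xi> \<in> measurable M S" "\<eta> \<in> measurable M T"
    using indep by (auto dest: indep_var_rv1 indep_var_rv2)
  interpret T: prob_space "distr M T \<eta>"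
    by (rule prob_space_distr) measurable
  have joint: "distr M (S \<Otimes>\<^sub>M T) (\<lambda>\<omega>. (\<xi> \<omega>, \<eta> \<omega>)) = distr M S \<xi> \<Otimes>\<^sub>M distr M T \<eta>"
    using indep by (simp add: indep_var_distribution_eq)
  have F: "(\<lambda>(a, b). G a * H a b) \<in> borel_measurable (distr M S \<xi> \<Otimes>\<^sub>M distr M T \<eta>)"
    by (simp cong: measurable_cong_sets) measurable
  have "(\<integral>\<^sup>+\<omega>. G (\<xi> \<omega>) * H (\<xi> \<omega>) (\<eta> \<omega>) \<partial>M)
      = (\<integral>\<^sup>+z. (\<lambda>(a, b). G a * H a b) z \<partial>distr M (S \<Otimes>\<^sub>M T) (\<lambda>\<omega>. (\<xi> \<omega>, \<eta> \<omega>)))"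
    by (subst nn_integral_distr) auto
  also have "\<dots> = (\<integral>\<^sup>+a. \<integral>\<^sup>+b. G a * H a b \<partial>distr M T \<eta> \<partial>distr M S \<xi>)"
    unfolding joint by (subst T.nn_integral_fst[OF F, symmetric]) simp
  also have "\<dots> = (\<integral>\<^sup>+a. G a * (\<integral>\<^sup>+b. H a b \<partial>distr M T \<eta>) \<partial>distr M S \<xi>)"
    by (intro nn_integral_cong nn_integral_cmult) (simp cong: measurable_cong_sets)
  also have "\<dots> = (\<integral>\<^sup>+\<omega>. G (\<xi> \<omega>) * (\<integral>\<^sup>+b. H (\<xi> \<omega>) b \<partial>distr M T \<eta>) \<partial>M)"
    by (simp add: nn_integral_distr)
  also have "\<dots> = (\<integral>\<^sup>+\<omega>. G (\<xi> \<omega>) * (\<integral>\<^sup>+\<omega>'. H (\<xi> \<omega>) (\<eta> \<omega>') \<partial>M) \<partial>M)"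
    using measurable_Pair2[OF H] by (intro nn_integral_cong) (simp add: nn_integral_distr measurable_space)
  also have "\<dots> \<le> (\<integral>\<^sup>+\<omega>. G (\<xi> \<omega>) \<partial>M)"
    using bound by (intro nn_integral_mono) (auto intro: mult_left_le)
  finally show ?thesis .
qed

lemma (in sigma_finite_subalgebra) AE_real_cond_exp_le_if_set_integral_le:
  assumes f: "integrable M f" and g: "integrable M g" "g \<in> borel_measurable F"
    and le: "\<And>A. A \<in> sets F \<Longrightarrow> (LINT x:A|M. f x) \<le> (LINT x:A|M. g x)"
  shows "AE x in M. real_cond_exp M F f x \<le> g x"
proof -
  let ?h = "real_cond_exp M F f"
  define D where "D = {x \<in> space M. g x < ?h x}"
  have "{x \<in> space F. g x < ?h x} \<in> sets F"
    using g(2) by measurable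
  then have "D \<in> sets F"
    using subalg by (simp add: D_def subalgebra_def)
  then have D: "D \<in> sets M"
    using subalg by (auto simp: subalgebra_def)
  have int: "set_integrable M D ?h" "set_integrable M D g"
    unfolding set_integrable_def
    by (intro integrable_mult_indicator[OF D] real_cond_exp_int(1) f g)+
  have "(LINT x:D|M. ?h x - g x) = (LINT x:D|M. f x) - (LINT x:D|M. g x)"
    using int by (simp add: set_integral_diff real_cond_exp_intA[OF f \<open>D \<in> sets F\<close>])
  also have "\<dots> \<le> 0"
    using le[OF \<open>D \<in> sets F\<close>] by simp
  finally have "(LINT x:D|M. ?h x - g x) = 0"
    unfolding set_lebesgue_integral_def
    by (intro antisym integral_nonneg_AE) (auto simp: D_def indicator_def)
  then have "D \<in> null_sets M"
    using D f g by (intro null_if_pos_func_has_zero_int) (auto simp: D_def)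
  then show ?thesis
    by (auto simp: D_def dest!: AE_not_in)
qed

lemma space_gen_sigma [simp]: "space (gen_sigma M Z n) = space M"
  unfolding gen_sigma_def by (rule space_measure_of) auto

lemma sets_gen_sigma:
  "sets (gen_sigma M Z n) = sigma_sets (space M) {Z i -` A \<inter> space M | i A. i \<in> {1..n} \<and> A \<in> sets borel}"
  unfolding gen_sigma_def by (rule sets_measure_of) auto

lemma measurable_gen_sigma: "i \<in> {1..n} \<Longrightarrow> Z i \<in> borel_measurable (gen_sigma M Z n)"
  by (rule measurableI) (auto simp: sets_gen_sigma)

lemma sets_gen_sigma_subset:
  assumes "space N = space M" and "\<And>i. i \<in> {1..n} \<Longrightarrow> Z i \<in> borel_measurable N"
  shows "sets (gen_sigma M Z n) \<subseteq> sets N"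
  unfolding sets_gen_sigma using assms
  by (intro sets.sigma_sets_subset') (auto simp flip: assms(1))

definition net_loss :: "(nat \<Rightarrow> 'a \<Rightarrow> real) \<Rightarrow> (nat \<Rightarrow> 'a \<Rightarrow> real) \<Rightarrow> (nat \<Rightarrow> 'a \<Rightarrow> real)
    \<Rightarrow> nat \<Rightarrow> 'a \<Rightarrow> real" where
  "net_loss X Y I i \<omega> = Y i \<omega> * inverse (1 + I i \<omega>) - X i \<omega>"

definition discount :: "(nat \<Rightarrow> 'a \<Rightarrow> real) \<Rightarrow> nat \<Rightarrow> 'a \<Rightarrow> real" where
  "discount I n \<omega> = (\<Prod>j\<in>{1..n}. inverse (1 + I j \<omega>))"

lemma disc_loss_0 [simp]: "disc_loss X Y I 0 \<omega> = 0"
  by (simp add: disc_loss_def)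

lemma disc_loss_Suc:
  "disc_loss X Y I (Suc n) \<omega> = disc_loss X Y I n \<omega> + net_loss X Y I (Suc n) \<omega> * discount I n \<omega>"
  by (simp add: disc_loss_def net_loss_def discount_def atLeastLessThanSuc_atLeastAtMost)

lemma discount_pos: "(\<And>j. j \<in> {1..n} \<Longrightarrow> 0 \<le> I j \<omega>) \<Longrightarrow> 0 < discount I n \<omega>"
  unfolding discount_def by (intro prod_pos) (simp add: add_pos_nonneg)

lemma discount_le_one: "(\<And>j. j \<in> {1..n} \<Longrightarrow> 0 \<le> I j \<omega>) \<Longrightarrow> discount I n \<omega> \<le> 1"
  unfolding discount_def by (intro prod_le_1) (auto simp: add_pos_nonneg inverse_le_1_iff)

lemma borel_measurable_disc_loss:
  assumes "\<And>i. i \<in> {1..n} \<Longrightarrow>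
    X i \<in> borel_measurable N \<and> Y i \<in> borel_measurable N \<and> I i \<in> borel_measurable N"
  shows "disc_loss X Y I n \<in> borel_measurable N"
proof -
  have [measurable]: "X i \<in> borel_measurable N" "Y i \<in> borel_measurable N" "I i \<in> borel_measurable N"
    if "i \<in> {1..n}" for i
    using assms that by auto
  show ?thesis
    unfolding disc_loss_def by measurable
qed

lemma borel_measurable_discount:
  "(\<And>j. j \<in> {1..n} \<Longrightarrow> I j \<in> borel_measurable N) \<Longrightarrow> discount I n \<in> borel_measurable N"
  unfolding discount_def by (rule borel_measurable_prod) measurable

lemma surplus_eq_disc_loss:
  assumes "\<And>j. j \<in> {1..n} \<Longrightarrow> 0 \<le> I j \<omega>"
  shows "surplus u X Y I n \<omega> = (u - disc_loss X Y I n \<omega>) / discount I n \<omega>"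
  using assms
proof (induction n)
  case (Suc n)
  have pos: "0 < discount I n \<omega>" "0 < 1 + I (Suc n) \<omega>"
    using Suc.prems by (auto intro: discount_pos add_pos_nonneg)
  have IH: "surplus u X Y I n \<omega> = (u - disc_loss X Y I n \<omega>) / discount I n \<omega>"
    using Suc by simp
  have "discount I (Suc n) \<omega> = discount I n \<omega> / (1 + I (Suc n) \<omega>)"
    by (simp add: discount_def field_simps)
  then show ?case
    using pos unfolding surplus.simps IH disc_loss_Suc net_loss_def
    by (simp add: field_simps)
qed (simp add: discount_def)

definition period_net_loss :: "(nat \<Rightarrow> real) \<Rightarrow> real" where
  "period_net_loss t = t 1 * inverse (1 + t 2) - t 0"

lemma borel_measurable_period_net_loss [measurable]:
  "period_net_loss \<in> borel_measurable (PiM {0, 1, 2} (\<lambda>_. borel))"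
  unfolding period_net_loss_def by measurable

locale risk_model = prob_space M for M :: "'a measure" +
  fixes X Y I :: "nat \<Rightarrow> 'a \<Rightarrow> real" and R :: real
  assumes indep: "indep_vars (\<lambda>_. borel) (risk_family X Y I) ({0, 1, 2} \<times> {1..})"
    and idX: "\<And>n. n \<ge> 1 \<Longrightarrow> distr M borel (X n) = distr M borel (X 1)"
    and idY: "\<And>n. n \<ge> 1 \<Longrightarrow> distr M borel (Y n) = distr M borel (Y 1)"
    and idI: "\<And>n. n \<ge> 1 \<Longrightarrow> distr M borel (I n) = distr M borel (I 1)"
    and I_nonneg: "\<And>n \<omega>. n \<ge> 1 \<Longrightarrow> \<omega> \<in> space M \<Longrightarrow> I n \<omega> \<ge> 0"
    and R_pos: "R > 0"
    and lundberg: "(\<integral>\<^sup>+\<omega>. exp (R * net_loss X Y I 1 \<omega>) \<partial>M) \<le> 1"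
begin

abbreviation Z :: "nat \<Rightarrow> 'a \<Rightarrow> real" where
  "Z n \<omega> \<equiv> exp (R * disc_loss X Y I n \<omega>)"

definition period :: "nat \<Rightarrow> 'a \<Rightarrow> nat \<Rightarrow> real" where
  "period m \<omega> = (\<lambda>a\<in>{0, 1, 2}. risk_family X Y I (a, m) \<omega>)"

definition sigma_of :: "nat set \<Rightarrow> 'a measure" where
  "sigma_of P = vimage_algebra (space M) (\<lambda>\<omega>. \<lambda>k\<in>{0, 1, 2} \<times> P. risk_family X Y I k \<omega>)
     (PiM ({0, 1, 2} \<times> P) (\<lambda>_. borel))"

lemma measurable_risk_family: "k \<in> {0, 1, 2} \<times> {1..} \<Longrightarrow> risk_family X Y I k \<in> borel_measurable M"
  using indep by (auto simp: indep_vars_def)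

lemma measurable_X_Y_I:
  "i \<ge> 1 \<Longrightarrow> X i \<in> borel_measurable M \<and> Y i \<in> borel_measurable M \<and> I i \<in> borel_measurable M"
  using measurable_risk_family[of "(0, i)"] measurable_risk_family[of "(1, i)"]
    measurable_risk_family[of "(2, i)"]
  by (auto simp: risk_family_def)

lemma measurable_disc_loss [measurable]: "disc_loss X Y I n \<in> borel_measurable M"
  using measurable_X_Y_I by (intro borel_measurable_disc_loss) auto

lemma measurable_restrict_risk_family:
  "P \<subseteq> {1..} \<Longrightarrow>
    (\<lambda>\<omega>. \<lambda>k\<in>{0, 1, 2} \<times> P. risk_family X Y I k \<omega>) \<in> measurable M (PiM ({0, 1, 2} \<times> P) (\<lambda>_. borel))"
  by (intro measurable_restrict measurable_risk_family) auto

lemma space_sigma_of [simp]: "space (sigma_of P) = space M"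
  by (simp add: sigma_of_def)

lemma sets_sigma_of_subset: "P \<subseteq> {1..} \<Longrightarrow> sets (sigma_of P) \<subseteq> sets M"
  unfolding sigma_of_def by (rule sets_image_in_sets[OF refl measurable_restrict_risk_family])

lemma measurable_sigma_of_X_Y_I:
  assumes P: "P \<subseteq> {1..}" and "i \<in> P"
  shows "X i \<in> borel_measurable (sigma_of P) \<and> Y i \<in> borel_measurable (sigma_of P)
    \<and> I i \<in> borel_measurable (sigma_of P)"
proof -
  let ?obs = "\<lambda>\<omega>. \<lambda>k\<in>{0, 1, 2} \<times> P. risk_family X Y I k \<omega>"
  have obs: "?obs \<in> space M \<rightarrow> space (PiM ({0, 1, 2} \<times> P) (\<lambda>_. borel))"
    using measurable_restrict_risk_family[OF P] unfolding measurable_def by blast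
  have "risk_family X Y I (a, i) \<in> borel_measurable (sigma_of P)" if "a \<in> {0, 1, 2}" for a
  proof -
    have "(\<lambda>\<omega>. ?obs \<omega> (a, i)) \<in> borel_measurable (sigma_of P)"
      unfolding sigma_of_def using that \<open>i \<in> P\<close>
      by (intro measurable_compose[OF measurable_vimage_algebra1[OF obs] measurable_component_singleton]) auto
    then show ?thesis
      using that \<open>i \<in> P\<close> by simp
  qed
  from this[of 0] this[of 1] this[of 2] show ?thesis
    by (simp add: risk_family_def)
qed

(* Independence of past and future is expressed through the identity maps into the generated
   sigma-algebras, because indep_var requires both random variables to take values in the same type. *)
lemma indep_sigma_of:
  assumes "P \<inter> Q = {}" "P \<subseteq> {1..}" "Q \<subseteq> {1..}"
  shows "indep_var (sigma_of P) (\<lambda>\<omega>. \<omega>) (sigma_of Q) (\<lambda>\<omega>. \<omega>)"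
  unfolding sigma_of_def using assms by (intro indep_var_vimage_algebra indep_var_restrict[OF indep]) auto

lemma net_loss_eq_period_net_loss: "net_loss X Y I m \<omega> = period_net_loss (period m \<omega>)"
  by (simp add: net_loss_def period_net_loss_def period_def risk_family_def)

lemma measurable_period: "m \<ge> 1 \<Longrightarrow> period m \<in> measurable M (PiM {0, 1, 2} (\<lambda>_. borel))"
  unfolding period_def by (intro measurable_restrict measurable_risk_family) auto

lemma indep_vars_period:
  assumes "m \<ge> 1"
  shows "indep_vars (\<lambda>_. borel) (\<lambda>a. risk_family X Y I (a, m)) {0, 1, 2}"
proof -
  have "indep_vars (\<lambda>a. PiM {(a, m)} (\<lambda>_. borel)) (\<lambda>a \<omega>. \<lambda>k\<in>{(a, m)}. risk_family X Y I k \<omega>) {0, 1, 2}"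
    using assms by (intro indep_vars_restrict[OF indep]) (auto simp: disjoint_family_on_def)
  then have "indep_vars (\<lambda>_. borel) (\<lambda>a \<omega>. (\<lambda>k\<in>{(a, m)}. risk_family X Y I k \<omega>) (a, m)) {0, 1, 2}"
    by (rule indep_vars_compose2) simp
  then show ?thesis
    by simp
qed

lemma distr_period:
  assumes "m \<ge> 1"
  shows "distr M (PiM {0, 1, 2} (\<lambda>_. borel)) (period m) = distr M (PiM {0, 1, 2} (\<lambda>_. borel)) (period 1)"
proof -
  have "distr M borel (risk_family X Y I (a, m)) = distr M borel (risk_family X Y I (a, 1))" for a
    using idX[OF assms] idY[OF assms] idI[OF assms] by (simp add: risk_family_def)
  then show ?thesis
    unfolding period_def using assms
    by (intro distr_restrict_eq_if_indep_vars indep_vars_period) simp_all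
qed

lemma nn_integral_exp_net_loss_le_one:
  assumes m: "m \<ge> 1" and p: "0 \<le> p" "p \<le> 1"
  shows "(\<integral>\<^sup>+\<omega>. exp (p * (R * net_loss X Y I m \<omega>)) \<partial>M) \<le> 1"
proof -
  have "(\<integral>\<^sup>+\<omega>. exp (p * (R * net_loss X Y I m \<omega>)) \<partial>M)
      = (\<integral>\<^sup>+t. exp (p * (R * period_net_loss t)) \<partial>distr M (PiM {0, 1, 2} (\<lambda>_. borel)) (period m))"
    by (subst nn_integral_distr[OF measurable_period[OF m]])
      (measurable, simp add: net_loss_eq_period_net_loss)
  also have "\<dots> = (\<integral>\<^sup>+\<omega>. exp (p * (R * net_loss X Y I 1 \<omega>)) \<partial>M)"
    unfolding distr_period[OF m]
    by (subst nn_integral_distr[OF measurable_period]) (simp, measurable, simp add: net_loss_eq_period_net_loss)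
  also have "\<dots> \<le> 1"
    using measurable_X_Y_I[of 1] lundberg p
    by (intro nn_integral_exp_scaled_le_one[where f = "\<lambda>\<omega>. R * net_loss X Y I 1 \<omega>"])
      (auto simp: net_loss_def)
  finally show ?thesis .
qed

lemma measurable_sigma_of_disc_loss: "k \<le> n \<Longrightarrow> disc_loss X Y I k \<in> borel_measurable (sigma_of {1..n})"
  using measurable_sigma_of_X_Y_I[of "{1..n}"] by (intro borel_measurable_disc_loss) auto

lemma measurable_sigma_of_discount: "discount I n \<in> borel_measurable (sigma_of {1..n})"
  using measurable_sigma_of_X_Y_I[of "{1..n}"] by (intro borel_measurable_discount) auto

lemma measurable_sigma_of_net_loss:
  assumes "m \<ge> 1"
  shows "net_loss X Y I m \<in> borel_measurable (sigma_of {m})"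
proof -
  have [measurable]: "X m \<in> borel_measurable (sigma_of {m})" "Y m \<in> borel_measurable (sigma_of {m})"
    "I m \<in> borel_measurable (sigma_of {m})"
    using measurable_sigma_of_X_Y_I[of "{m}" m] assms by auto
  show ?thesis
    unfolding net_loss_def by measurable
qed

lemma set_nn_integral_Z_Suc_le:
  assumes A: "A \<in> sets (sigma_of {1..n})"
  shows "(\<integral>\<^sup>+\<omega>\<in>A. Z (Suc n) \<omega> \<partial>M) \<le> (\<integral>\<^sup>+\<omega>\<in>A. Z n \<omega> \<partial>M)"
proof -
  note [measurable] = A measurable_sigma_of_disc_loss[OF order_refl] measurable_sigma_of_discount
    measurable_sigma_of_net_loss[of "Suc n", simplified]
  have bound: "(\<integral>\<^sup>+\<omega>'. exp (R * (discount I n \<omega> * net_loss X Y I (Suc n) \<omega>')) \<partial>M) \<le> 1"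
    if "\<omega> \<in> space M" for \<omega>
  proof -
    have I: "\<And>j. j \<in> {1..n} \<Longrightarrow> 0 \<le> I j \<omega>"
      using that I_nonneg by simp
    have "0 < discount I n \<omega>"
      using I by (rule discount_pos)
    moreover have "discount I n \<omega> \<le> 1"
      using I by (rule discount_le_one)
    ultimately show ?thesis
      using nn_integral_exp_net_loss_le_one[of "Suc n" "discount I n \<omega>"] by (simp add: mult.left_commute)
  qed
  have Z_Suc: "Z (Suc n) \<omega> = Z n \<omega> * exp (R * (discount I n \<omega> * net_loss X Y I (Suc n) \<omega>))" for \<omega>
    by (simp add: disc_loss_Suc distrib_left exp_add mult.commute)
  have "(\<integral>\<^sup>+\<omega>\<in>A. Z (Suc n) \<omega> \<partial>M)
      = (\<integral>\<^sup>+\<omega>. ennreal (Z n \<omega>) * indicator A \<omega> * exp (R * (discount I n \<omega> * net_loss X Y I (Suc n) \<omega>)) \<partial>M)"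
    unfolding Z_Suc by (simp add: ennreal_mult mult_ac)
  also have "\<dots> \<le> (\<integral>\<^sup>+\<omega>\<in>A. Z n \<omega> \<partial>M)"
  proof (rule nn_integral_indep_var_le[OF indep_sigma_of[of "{1..n}" "{Suc n}"],
      where H = "\<lambda>\<omega> \<omega>'. exp (R * (discount I n \<omega> * net_loss X Y I (Suc n) \<omega>'))"])
    show "(\<lambda>\<omega>. ennreal (Z n \<omega>) * indicator A \<omega>) \<in> borel_measurable (sigma_of {1..n})"
      by measurable
    show "(\<lambda>(\<omega>, \<omega>'). ennreal (exp (R * (discount I n \<omega> * net_loss X Y I (Suc n) \<omega>'))))
        \<in> borel_measurable (sigma_of {1..n} \<Otimes>\<^sub>M sigma_of {Suc n})"
      by measurable
  qed (use bound in auto)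
  finally show ?thesis .
qed

lemma nn_integral_Z_le_one: "(\<integral>\<^sup>+\<omega>. Z n \<omega> \<partial>M) \<le> 1"
proof (induction n)
  case (Suc n)
  have "space M \<in> sets (sigma_of {1..n})"
    by (metis sets.top space_sigma_of)
  then have "(\<integral>\<^sup>+\<omega>\<in>space M. Z (Suc n) \<omega> \<partial>M) \<le> (\<integral>\<^sup>+\<omega>\<in>space M. Z n \<omega> \<partial>M)"
    by (rule set_nn_integral_Z_Suc_le)
  with Suc show ?case
    by simp
qed (simp add: emeasure_space_1)

lemma integrable_Z: "integrable M (Z n)"
  using nn_integral_Z_le_one[of n] by (intro integrableI_nonneg) (auto simp: top.not_eq_extremum le_less_trans)

lemma set_integral_Z_Suc_le:
  assumes A: "A \<in> sets (sigma_of {1..n})"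
  shows "(LINT \<omega>:A|M. Z (Suc n) \<omega>) \<le> (LINT \<omega>:A|M. Z n \<omega>)"
proof -
  have "A \<in> sets M"
    using A sets_sigma_of_subset[of "{1..n}"] by auto
  then have "ennreal (LINT \<omega>:A|M. Z (Suc n) \<omega>) \<le> ennreal (LINT \<omega>:A|M. Z n \<omega>)"
    using set_nn_integral_Z_Suc_le[OF A] by (simp add: nn_set_integral_eq_set_integral integrable_Z)
  moreover have "0 \<le> (LINT \<omega>:A|M. Z n \<omega>)"
    unfolding set_lebesgue_integral_def by (simp add: integral_nonneg)
  ultimately show ?thesis
    by simp
qed

lemma AE_cond_exp_Z_Suc_le:
  assumes "n \<ge> 1"
  shows "AE \<omega> in M. real_cond_exp M (gen_sigma M Z n) (Z (Suc n)) \<omega> \<le> Z n \<omega>"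
proof -
  have "Z i \<in> borel_measurable (sigma_of {1..n})" if "i \<in> {1..n}" for i
  proof -
    have [measurable]: "disc_loss X Y I i \<in> borel_measurable (sigma_of {1..n})"
      using that by (intro measurable_sigma_of_disc_loss) simp
    show ?thesis
      by measurable
  qed
  then have F_past: "sets (gen_sigma M Z n) \<subseteq> sets (sigma_of {1..n})"
    by (intro sets_gen_sigma_subset) auto
  then have "subalgebra M (gen_sigma M Z n)"
    using sets_sigma_of_subset[of "{1..n}"] by (auto simp: subalgebra_def)
  then interpret sigma_finite_subalgebra M "gen_sigma M Z n"
    by (intro finite_measure_subalgebra_is_sigma_finite) unfold_locales
  show ?thesis
  proof (rule AE_real_cond_exp_le_if_set_integral_le)
    show "Z n \<in> borel_measurable (gen_sigma M Z n)"
      using assms by (intro measurable_gen_sigma) simp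
    show "(LINT \<omega>:A|M. Z (Suc n) \<omega>) \<le> (LINT \<omega>:A|M. Z n \<omega>)" if "A \<in> sets (gen_sigma M Z n)" for A
      using F_past that by (intro set_integral_Z_Suc_le) blast
  qed (rule integrable_Z)+
qed

definition solvent :: "real \<Rightarrow> nat \<Rightarrow> 'a set" where
  "solvent u N = {\<omega> \<in> space M. \<forall>k\<in>{1..N}. disc_loss X Y I k \<omega> \<le> u}"

lemma solvent_in_sigma_of: "solvent u N \<in> sets (sigma_of {1..N})"
proof -
  have "Measurable.pred (sigma_of {1..N}) (\<lambda>\<omega>. \<forall>k\<in>{1..N}. disc_loss X Y I k \<omega> \<le> u)"
  proof (rule pred_intros_finite)
    fix k assume "k \<in> {1..N}"
    then have [measurable]: "disc_loss X Y I k \<in> borel_measurable (sigma_of {1..N})"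
      by (intro measurable_sigma_of_disc_loss) simp
    show "Measurable.pred (sigma_of {1..N}) (\<lambda>\<omega>. disc_loss X Y I k \<omega> \<le> u)"
      by measurable
  qed simp
  then show ?thesis
    by (simp add: solvent_def pred_def)
qed

lemma solvent_sets [measurable]: "solvent u N \<in> sets M"
  using solvent_in_sigma_of sets_sigma_of_subset[of "{1..N}"] by auto

lemma exp_less_Z_at_ruin:
  assumes "\<omega> \<in> solvent u N" "\<omega> \<notin> solvent u (Suc N)"
  shows "exp (R * u) < Z (Suc N) \<omega>"
proof -
  obtain k where k: "k \<in> {1..Suc N}" "u < disc_loss X Y I k \<omega>"
    using assms by (auto simp: solvent_def not_le)
  moreover have "k \<notin> {1..N}"
    using assms(1) k(2) unfolding solvent_def by (metis (no_types, lifting) mem_Collect_eq not_le)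
  ultimately have "u < disc_loss X Y I (Suc N) \<omega>"
    by (metis atLeastAtMost_iff le_SucE)
  then show ?thesis
    using R_pos by simp
qed

(* Optional stopping at the first k with S_k > u, where the stopped value Z_k is replaced by its
   lower bound e^(Ru). *)
lemma nn_integral_ruin_bound:
  "(\<integral>\<^sup>+\<omega>. ennreal (exp (R * u)) * indicator (space M - solvent u N) \<omega>
      + ennreal (Z N \<omega>) * indicator (solvent u N) \<omega> \<partial>M) \<le> 1"
proof (induction N)
  case 0
  have "solvent u 0 = space M"
    by (simp add: solvent_def)
  then show ?case
    by (simp add: emeasure_space_1)
next
  case (Suc N)
  let ?e = "ennreal (exp (R * u))" and ?S = "solvent u N" and ?S' = "solvent u (Suc N)"
  have "?e * indicator (space M - ?S') \<omega> + ennreal (Z (Suc N) \<omega>) * indicator ?S' \<omega>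
      \<le> ?e * indicator (space M - ?S) \<omega> + ennreal (Z (Suc N) \<omega>) * indicator ?S \<omega>"
    if "\<omega> \<in> space M" for \<omega>
    using that exp_less_Z_at_ruin[of \<omega> u N]
    by (cases "\<omega> \<in> ?S"; cases "\<omega> \<in> ?S'") (auto simp: solvent_def less_imp_le)
  then have "(\<integral>\<^sup>+\<omega>. ?e * indicator (space M - ?S') \<omega> + ennreal (Z (Suc N) \<omega>) * indicator ?S' \<omega> \<partial>M)
      \<le> (\<integral>\<^sup>+\<omega>. ?e * indicator (space M - ?S) \<omega> + ennreal (Z (Suc N) \<omega>) * indicator ?S \<omega> \<partial>M)"
    by (intro nn_integral_mono) simp
  also have "\<dots> = (\<integral>\<^sup>+\<omega>. ?e * indicator (space M - ?S) \<omega> \<partial>M) + (\<integral>\<^sup>+\<omega>\<in>?S. Z (Suc N) \<omega> \<partial>M)"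
    by (intro nn_integral_add) measurable
  also have "\<dots> \<le> (\<integral>\<^sup>+\<omega>. ?e * indicator (space M - ?S) \<omega> \<partial>M) + (\<integral>\<^sup>+\<omega>\<in>?S. Z N \<omega> \<partial>M)"
    by (intro add_left_mono set_nn_integral_Z_Suc_le solvent_in_sigma_of)
  also have "\<dots> = (\<integral>\<^sup>+\<omega>. ?e * indicator (space M - ?S) \<omega> + ennreal (Z N \<omega>) * indicator ?S \<omega> \<partial>M)"
    by (intro nn_integral_add[symmetric]) measurable
  finally show ?case
    using Suc by order
qed

lemma prob_not_solvent_le: "prob (space M - solvent u N) \<le> exp (- R * u)"
proof -
  have "ennreal (exp (R * u)) * emeasure M (space M - solvent u N)
      = (\<integral>\<^sup>+\<omega>. ennreal (exp (R * u)) * indicator (space M - solvent u N) \<omega> \<partial>M)"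
    by (simp add: nn_integral_cmult_indicator)
  also have "\<dots> \<le> (\<integral>\<^sup>+\<omega>. ennreal (exp (R * u)) * indicator (space M - solvent u N) \<omega>
      + ennreal (Z N \<omega>) * indicator (solvent u N) \<omega> \<partial>M)"
    by (intro nn_integral_mono) simp
  also have "\<dots> \<le> 1"
    by (rule nn_integral_ruin_bound)
  finally have "exp (R * u) * prob (space M - solvent u N) \<le> 1"
    by (simp add: emeasure_eq_measure flip: ennreal_mult)
  then show ?thesis
    by (simp add: exp_minus field_simps)
qed

lemma ruin_prob_le: "ruin_prob M X Y I u \<le> exp (- R * u)"
proof -
  have "surplus u X Y I n \<omega> < 0 \<longleftrightarrow> u < disc_loss X Y I n \<omega>" if "\<omega> \<in> space M" for n \<omega>
  proof -
    have I: "\<And>j. j \<in> {1..n} \<Longrightarrow> 0 \<le> I j \<omega>"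
      using that I_nonneg by simp
    have "0 < discount I n \<omega>"
      using I by (rule discount_pos)
    then show ?thesis
      using surplus_eq_disc_loss[of n I \<omega> u X Y, OF I] by (simp add: divide_less_0_iff)
  qed
  then have ruin: "(\<Union>n\<in>{1..}. {\<omega> \<in> space M. surplus u X Y I n \<omega> < 0}) = (\<Union>N. space M - solvent u N)"
    by (auto simp: solvent_def not_le) (meson atLeastAtMost_iff order_refl leD)
  have "(\<lambda>N. prob (space M - solvent u N)) \<longlonglongrightarrow> prob (\<Union>N. space M - solvent u N)"
    by (intro finite_Lim_measure_incseq incseq_SucI) (auto simp: solvent_def)
  then have "prob (\<Union>N. space M - solvent u N) \<le> exp (- R * u)"
    by (rule LIMSEQ_le_const2) (use prob_not_solvent_le in auto)
  then show ?thesis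
    unfolding ruin_prob_def ruin .
qed

end

theorem lemma2p4:
  fixes M :: "'a measure" and X Y I :: "nat \<Rightarrow> 'a \<Rightarrow> real" and R :: real
  assumes prob: "prob_space M"
    and indep: "prob_space.indep_vars M (\<lambda>_. borel) (risk_family X Y I) ({0,1,2} \<times> {1..})"
    and idX: "\<And>n. n \<ge> 1 \<Longrightarrow> distr M borel (X n) = distr M borel (X 1)"
    and idY: "\<And>n. n \<ge> 1 \<Longrightarrow> distr M borel (Y n) = distr M borel (Y 1)"
    and idI: "\<And>n. n \<ge> 1 \<Longrightarrow> distr M borel (I n) = distr M borel (I 1)"
    and nonneg: "\<And>n \<omega>. n \<ge> 1 \<Longrightarrow> \<omega> \<in> space M \<Longrightarrow> X n \<omega> \<ge> 0 \<and> Y n \<omega> \<ge> 0 \<and> I n \<omega> \<ge> 0"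
    and intX: "\<And>n. n \<ge> 1 \<Longrightarrow> integrable M (X n)"
    and intY: "\<And>n. n \<ge> 1 \<Longrightarrow> integrable M (Y n)"
    and intI: "\<And>n. n \<ge> 1 \<Longrightarrow> integrable M (I n)"
    and Rpos: "R > 0"
    and Rcond: "(\<integral>\<^sup>+ \<omega>. ennreal (exp (R * (Y 1 \<omega> * inverse (1 + I 1 \<omega>) - X 1 \<omega>))) \<partial>M) \<le> 1"
  shows "(\<forall>n\<ge>1. integrable M (\<lambda>\<omega>. exp (R * disc_loss X Y I n \<omega>)) \<and>
           (AE \<omega> in M. real_cond_exp M (gen_sigma M (\<lambda>k \<omega>. exp (R * disc_loss X Y I k \<omega>)) n)
                (\<lambda>\<omega>. exp (R * disc_loss X Y I (Suc n) \<omega>)) \<omega>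
              \<le> exp (R * disc_loss X Y I n \<omega>)))
      \<and> (\<forall>u>0. ruin_prob M X Y I u \<le> exp (- R * u))"
proof -
  have "(\<integral>\<^sup>+\<omega>. exp (R * net_loss X Y I 1 \<omega>) \<partial>M) \<le> 1"
    using Rcond by (simp add: net_loss_def)
  moreover have "\<And>n \<omega>. n \<ge> 1 \<Longrightarrow> \<omega> \<in> space M \<Longrightarrow> I n \<omega> \<ge> 0"
    using nonneg by blast
  ultimately interpret risk: risk_model M X Y I R
    using prob indep idX idY idI Rpos by (intro risk_model.intro risk_model_axioms.intro)
  show ?thesis
    using risk.integrable_Z risk.AE_cond_exp_Z_Suc_le risk.ruin_prob_le by simp
qed

end
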